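(* Consider the following remote estimation model over the finite horizon $t=0,1,\ldots,T$. A scalar process evolves as $x(t+1)=a x(t)+w(t)$, with $a\in\mathbb{R}$, $x(0)\sim\mathcal{N}(0,1)$ and $\{w(t)\}$ i.i.d. $\mathcal{N}(0,\sigma^2)$. A channel state process $\{c(t)\}\subset\{0,1\}$ is a two-state Markov chain with $\mathbb{P}(c(t+1)=1\mid c(t)=0)=p_{01}$ and $\mathbb{P}(c(t+1)=0\mid c(t)=1)=p_{10}$. At each time $t$ a sensor chooses $u(t)\in\{0,1\}$ by $u(t)=\phi_t(\mathcal{I}(t))$, where $\phi_t$ is measurable and $\mathcal{I}(t)=(\{x(s),c(s)\}_{s=0}^{t},\{u(s)\}_{s=0}^{t-1})$. The estimator satisfies $\hat{x}(0)=0$, and for $t\ge 1$, $\hat{x}(t)=a\hat{x}(t-1)$ if $u(t)c(t)=0$ and $\hat{x}(t)=x(t)$ if $u(t)c(t)=1$. Define the error $\Delta(0)=0$ and $\Delta(t)=x(t)-a\hat{x}(t-1)$, and the cost $d(\Delta,c,u)=\lambda u+(1-uc)\Delta^2$ with $\lambda>0$. For $\gamma>0$ consider the problem of minimizing $\mathbb{E}_{\phi}\big[\exp\big(\gamma\sum_{t=0}^{T} d(\Delta(t),c(t),u(t))\big)\big]$ over policies $\phi=(\phi_0,\ldots,\phi_T)$. Then there is no loss of optimality in restricting to policies of the form $u(t)=\phi_t(\Delta(t),c(t))$; i.e., $\{(\Delta(t),c(t))\}$ is a controlled Markov process (an information state) with control $u(t)$, and the problem is a Markov decision process with state space $\mathbb{R}\times\{0,1\}$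 and action space $\{0,1\}$.
   Context: $\mathbb{E}_\phi$ denotes expectation under the probability measure induced by the policy $\phi$. The error evolves as $\Delta(t+1)=a\Delta(t)+w(t)$ if $u(t)c(t)=0$ and $\Delta(t+1)=w(t)$ if $u(t)c(t)=1$. *)

theory Defs
  imports "HOL-Probability.Probability"
begin

text \<open>Sample point omega = (x0, w, c): initial state x(0), noise sequence w(0..T-1),
  channel trajectory c(0..T) (True = state 1, False = state 0).
  Actions u(t) are booleans (True = transmit).\<close>

fun xproc :: "real \<Rightarrow> real \<Rightarrow> (nat \<Rightarrow> real) \<Rightarrow> nat \<Rightarrow> real" where
  "xproc a x0 w 0 = x0"
| "xproc a x0 w (Suc t) = a * xproc a x0 w t + w t"

text \<open>A decision rule g t xs cs uh delta gives u(t) from the whole state trajectory xs,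
  the channel trajectory cs, the past actions uh (entries s < t meaningful) and the
  current error delta = Delta(t).  Concrete policies below only look at admissible parts.\<close>
type_synonym rule = "nat \<Rightarrow> (nat \<Rightarrow> real) \<Rightarrow> (nat \<Rightarrow> bool) \<Rightarrow> (nat \<Rightarrow> bool) \<Rightarrow> real \<Rightarrow> bool"

text \<open>sim g a xs cs t = (u(0..t) as a function (False elsewhere), xhat(t)).\<close>
fun sim :: "rule \<Rightarrow> real \<Rightarrow> (nat \<Rightarrow> real) \<Rightarrow> (nat \<Rightarrow> bool) \<Rightarrow> nat \<Rightarrow> (nat \<Rightarrow> bool) \<times> real" where
  "sim g a xs cs 0 = ((\<lambda>_. False)(0 := g 0 xs cs (\<lambda>_. False) 0), 0)"
| "sim g a xs cs (Suc t) =
     (let (uh, xh) = sim g a xs cs t;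
          \<delta> = xs (Suc t) - a * xh;
          u = g (Suc t) xs cs uh \<delta>
      in (uh(Suc t := u), if u \<and> cs (Suc t) then xs (Suc t) else a * xh))"

definition Delta :: "rule \<Rightarrow> real \<Rightarrow> (nat \<Rightarrow> real) \<Rightarrow> (nat \<Rightarrow> bool) \<Rightarrow> nat \<Rightarrow> real" where
  "Delta g a xs cs t = (if t = 0 then 0 else xs t - a * snd (sim g a xs cs (t - 1)))"

definition act :: "rule \<Rightarrow> real \<Rightarrow> (nat \<Rightarrow> real) \<Rightarrow> (nat \<Rightarrow> bool) \<Rightarrow> nat \<Rightarrow> bool" where
  "act g a xs cs t = fst (sim g a xs cs t) t"

definition stage_cost :: "real \<Rightarrow> real \<Rightarrow> bool \<Rightarrow> bool \<Rightarrow> real" where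
  "stage_cost lam \<delta> c u = lam * of_bool u + (1 - of_bool (u \<and> c)) * \<delta>\<^sup>2"

definition total_cost :: "nat \<Rightarrow> real \<Rightarrow> real \<Rightarrow> rule \<Rightarrow> real \<times> (nat \<Rightarrow> real) \<times> (nat \<Rightarrow> bool) \<Rightarrow> real" where
  "total_cost T a lam g \<omega> =
     (case \<omega> of (x0, w, cs) \<Rightarrow>
        (let xs = xproc a x0 w in
         \<Sum>t\<le>T. stage_cost lam (Delta g a xs cs t) (cs t) (act g a xs cs t)))"

definition chan_trans :: "real \<Rightarrow> real \<Rightarrow> bool \<Rightarrow> bool \<Rightarrow> real" where
  "chan_trans p01 p10 b b' =
     (if b then (if b' then 1 - p10 else p10) else (if b' then p01 else 1 - p01))"

definition chan_measure :: "nat \<Rightarrow> real \<Rightarrow> real \<Rightarrow> real \<Rightarrow> (nat \<Rightarrow> bool) measure" where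
  "chan_measure T q p01 p10 =
     point_measure {cs. \<forall>t>T. cs t = False}
       (\<lambda>cs. ennreal ((if cs 0 then q else 1 - q) * (\<Prod>t<T. chan_trans p01 p10 (cs t) (cs (Suc t)))))"

definition model :: "nat \<Rightarrow> real \<Rightarrow> real \<Rightarrow> real \<Rightarrow> real \<Rightarrow>
    (real \<times> (nat \<Rightarrow> real) \<times> (nat \<Rightarrow> bool)) measure" where
  "model T \<sigma> q p01 p10 =
     density lborel (normal_density 0 1)
     \<Otimes>\<^sub>M (PiM {..<T} (\<lambda>_. density lborel (normal_density 0 \<sigma>))
     \<Otimes>\<^sub>M chan_measure T q p01 p10)"

definition risk_cost :: "nat \<Rightarrow> real \<Rightarrow> real \<Rightarrow> real \<Rightarrow> real \<Rightarrow> real \<Rightarrow> real \<Rightarrow> real \<Rightarrow> rule \<Rightarrow> ennreal" where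
  "risk_cost T a \<sigma> q p01 p10 lam \<gamma> g =
     (\<integral>\<^sup>+ \<omega>. ennreal (exp (\<gamma> * total_cost T a lam g \<omega>)) \<partial>model T \<sigma> q p01 p10)"

type_synonym hist_policy = "nat \<Rightarrow> (nat \<Rightarrow> real) \<times> (nat \<Rightarrow> bool) \<times> (nat \<Rightarrow> bool) \<Rightarrow> bool"

definition info_space :: "nat \<Rightarrow> ((nat \<Rightarrow> real) \<times> (nat \<Rightarrow> bool) \<times> (nat \<Rightarrow> bool)) measure" where
  "info_space t = PiM {..t} (\<lambda>_. borel) \<Otimes>\<^sub>M (PiM {..t} (\<lambda>_. count_space UNIV)
                    \<Otimes>\<^sub>M PiM {..<t} (\<lambda>_. count_space UNIV))"

definition hist_policies :: "nat \<Rightarrow> hist_policy set" where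
  "hist_policies T = {\<phi>. \<forall>t\<le>T. \<phi> t \<in> info_space t \<rightarrow>\<^sub>M count_space UNIV}"

definition hist_rule :: "hist_policy \<Rightarrow> rule" where
  "hist_rule \<phi> = (\<lambda>t xs cs uh \<delta>. \<phi> t (restrict xs {..t}, restrict cs {..t}, restrict uh {..<t}))"

type_synonym markov_policy = "nat \<Rightarrow> real \<Rightarrow> bool \<Rightarrow> bool"

definition markov_policies :: "nat \<Rightarrow> markov_policy set" where
  "markov_policies T = {\<psi>. \<forall>t\<le>T. (\<lambda>(\<delta>, b). \<psi> t \<delta> b) \<in> borel \<Otimes>\<^sub>M count_space UNIV \<rightarrow>\<^sub>M count_space UNIV}"

definition markov_rule :: "markov_policy \<Rightarrow> rule" where
  "markov_rule \<psi> = (\<lambda>t xs cs uh \<delta>. \<psi> t \<delta> (cs t))"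

end

(*
  The exponential of an additive cost is a product of stage factors, so the factor accumulated in the
  past can be pulled out of the conditional expectation of the future. Given the history up to time t,
  the next error is w(t) after a successful transmission (u(t) c(t) = 1) and a Delta(t) + w(t)
  otherwise, and the next channel state depends only on c(t). Hence the value functions V_k(Delta, c)
  of the Markov problem, defined by backward induction, satisfy: the accumulated factor times
  V_(T-t)(Delta(t), c(t)) is at most the conditional expected cost of any causal policy, with equality
  for the policy that picks a minimizing action of the Bellman equation. This policy is Markov and
  measurable, so it is optimal among history-dependent policies; conversely every Markov policy is a
  history policy, because Delta(t) can be recomputed from I(t).
*)
theory Submission
  imports Defs
begin

abbreviation sim_actions :: "rule \<Rightarrow> real \<Rightarrow> (nat \<Rightarrow> real) \<Rightarrow> (nat \<Rightarrow> bool) \<Rightarrow> nat \<Rightarrow> nat \<Rightarrow> bool"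
  where "sim_actions g a xs cs t \<equiv> fst (sim g a xs cs t)"

abbreviation sim_estimate :: "rule \<Rightarrow> real \<Rightarrow> (nat \<Rightarrow> real) \<Rightarrow> (nat \<Rightarrow> bool) \<Rightarrow> nat \<Rightarrow> real"
  where "sim_estimate g a xs cs t \<equiv> snd (sim g a xs cs t)"

lemma sim_actions_Suc:
  "sim_actions g a xs cs (Suc t) = (sim_actions g a xs cs t)
     (Suc t := g (Suc t) xs cs (sim_actions g a xs cs t) (xs (Suc t) - a * sim_estimate g a xs cs t))"
  by (simp add: Let_def split: prod.split)

lemma sim_estimate_Suc:
  "sim_estimate g a xs cs (Suc t) =
     (if g (Suc t) xs cs (sim_actions g a xs cs t) (xs (Suc t) - a * sim_estimate g a xs cs t) \<and> cs (Suc t)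
      then xs (Suc t) else a * sim_estimate g a xs cs t)"
  by (simp add: Let_def split: prod.split)

declare sim.simps(2) [simp del]

lemma Delta_0 [simp]: "Delta g a xs cs 0 = 0"
  by (simp add: Delta_def)

lemma Delta_Suc: "Delta g a xs cs (Suc t) = xs (Suc t) - a * sim_estimate g a xs cs t"
  by (simp add: Delta_def)

lemma act_0: "act g a xs cs 0 = g 0 xs cs (\<lambda>_. False) 0"
  by (simp add: act_def)

lemma act_Suc:
  "act g a xs cs (Suc t) = g (Suc t) xs cs (sim_actions g a xs cs t) (Delta g a xs cs (Suc t))"
  by (simp add: act_def sim_actions_Suc Delta_Suc)

lemma sim_estimate_Suc_act:
  "sim_estimate g a xs cs (Suc t) =
     (if act g a xs cs (Suc t) \<and> cs (Suc t) then xs (Suc t) else a * sim_estimate g a xs cs t)"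
  by (simp add: sim_estimate_Suc act_Suc Delta_Suc)

lemma sim_actions_eq_act: "s \<le> t \<Longrightarrow> sim_actions g a xs cs t s = act g a xs cs s"
proof (induction t)
  case 0
  then show ?case by (simp add: act_def)
next
  case (Suc t)
  then show ?case by (cases "s = Suc t") (auto simp: sim_actions_Suc act_def)
qed

definition causal :: "rule \<Rightarrow> bool" where
  "causal g \<longleftrightarrow> (\<forall>t xs xs' cs cs' uh uh' \<delta>. (\<forall>s\<le>t. xs s = xs' s) \<longrightarrow> (\<forall>s\<le>t. cs s = cs' s)
      \<longrightarrow> (\<forall>s<t. uh s = uh' s) \<longrightarrow> g t xs cs uh \<delta> = g t xs' cs' uh' \<delta>)"

lemma causalD:
  "causal g \<Longrightarrow> (\<And>s. s \<le> t \<Longrightarrow> xs s = xs' s) \<Longrightarrow> (\<And>s. s \<le> t \<Longrightarrow> cs s = cs' s)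
    \<Longrightarrow> (\<And>s. s < t \<Longrightarrow> uh s = uh' s) \<Longrightarrow> g t xs cs uh \<delta> = g t xs' cs' uh' \<delta>"
  unfolding causal_def by blast

lemma causal_hist_rule: "causal (hist_rule \<phi>)"
  unfolding causal_def hist_rule_def restrict_def by (simp cong: if_cong)

lemma causal_markov_rule: "causal (markov_rule \<psi>)"
  unfolding causal_def markov_rule_def by auto

lemma sim_causal:
  assumes g: "causal g" and "\<And>s. s \<le> t \<Longrightarrow> xs s = xs' s" and "\<And>s. s \<le> t \<Longrightarrow> cs s = cs' s"
  shows "sim g a xs cs t = sim g a xs' cs' t"
  using assms(2,3)
proof (induction t)
  case 0
  have "g 0 xs cs (\<lambda>_. False) 0 = g 0 xs' cs' (\<lambda>_. False) 0"
    by (rule causalD[OF g]) (use 0 in auto)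
  then show ?case by simp
next
  case (Suc t)
  have IH: "sim g a xs cs t = sim g a xs' cs' t"
    using Suc by simp
  have "g (Suc t) xs cs (sim_actions g a xs cs t) \<delta> = g (Suc t) xs' cs' (sim_actions g a xs' cs' t) \<delta>" for \<delta>
    by (rule causalD[OF g]) (use Suc.prems IH in auto)
  then show ?case
    using Suc.prems[of "Suc t"] IH by (intro prod_eqI) (simp_all add: sim_actions_Suc sim_estimate_Suc)
qed

lemma Delta_causal:
  "causal g \<Longrightarrow> (\<And>s. s \<le> t \<Longrightarrow> xs s = xs' s) \<Longrightarrow> (\<And>s. s \<le> t \<Longrightarrow> cs s = cs' s)
    \<Longrightarrow> Delta g a xs cs t = Delta g a xs' cs' t"
  using sim_causal[of g "t - 1" xs xs' cs cs' a] by (simp add: Delta_def)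

lemma act_causal:
  "causal g \<Longrightarrow> (\<And>s. s \<le> t \<Longrightarrow> xs s = xs' s) \<Longrightarrow> (\<And>s. s \<le> t \<Longrightarrow> cs s = cs' s)
    \<Longrightarrow> act g a xs cs t = act g a xs' cs' t"
  using sim_causal[of g t xs xs' cs cs' a] by (simp add: act_def)

lemma act_markov_rule: "act (markov_rule \<psi>) a xs cs t = \<psi> t (Delta (markov_rule \<psi>) a xs cs t) (cs t)"
  by (cases t) (simp_all add: act_0 act_Suc markov_rule_def)

lemma xproc_causal: "(\<And>s. s < t \<Longrightarrow> w s = w' s) \<Longrightarrow> xproc a x0 w t = xproc a x0 w' t"
  by (induction t) auto

lemma Delta_Suc_fun_upd:
  assumes g: "causal g" and t: "0 < t"
  shows "Delta g a (xproc a x0 (w(t := v))) (cs(Suc t := b)) (Suc t) =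
     (if act g a (xproc a x0 w) cs t \<and> cs t then v else a * Delta g a (xproc a x0 w) cs t + v)"
proof -
  let ?xs = "xproc a x0 w" and ?xs' = "xproc a x0 (w(t := v))"
  have past: "sim g a ?xs' (cs(Suc t := b)) t = sim g a ?xs cs t"
    by (rule sim_causal[OF g]) (auto intro: xproc_causal)
  have now: "?xs' (Suc t) = a * ?xs t + v"
    by (simp add: xproc_causal[of t "w(t := v)" w])
  obtain t0 where t0: "t = Suc t0" using t by (cases t) auto
  show ?thesis
    unfolding Delta_Suc past now unfolding t0 sim_estimate_Suc_act Delta_Suc
    by (simp add: algebra_simps)
qed

lemma Delta_one: "Delta g a (xproc a x0 w) cs (Suc 0) = a * x0 + w 0"
  by (simp add: Delta_Suc)

section \<open>Markov policies as history policies\<close>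

primrec estimate_from_history ::
    "real \<Rightarrow> (nat \<Rightarrow> real) \<Rightarrow> (nat \<Rightarrow> bool) \<Rightarrow> (nat \<Rightarrow> bool) \<Rightarrow> nat \<Rightarrow> real" where
  "estimate_from_history a xs cs uh 0 = 0"
| "estimate_from_history a xs cs uh (Suc s) =
     (if uh (Suc s) \<and> cs (Suc s) then xs (Suc s) else a * estimate_from_history a xs cs uh s)"

lemma estimate_from_history_eq_sim_estimate:
  "(\<And>s'. s' \<le> s \<Longrightarrow> uh s' = act g a xs cs s') \<Longrightarrow> (\<And>s'. s' \<le> s \<Longrightarrow> xs' s' = xs s')
    \<Longrightarrow> (\<And>s'. s' \<le> s \<Longrightarrow> cs' s' = cs s') \<Longrightarrow> estimate_from_history a xs' cs' uh s = sim_estimate g a xs cs s"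
  by (induction s) (simp_all add: sim_estimate_Suc_act)

definition error_from_history :: "real \<Rightarrow> nat \<Rightarrow> (nat \<Rightarrow> real) \<Rightarrow> (nat \<Rightarrow> bool) \<Rightarrow> (nat \<Rightarrow> bool) \<Rightarrow> real" where
  "error_from_history a t xs cs uh = (if t = 0 then 0 else xs t - a * estimate_from_history a xs cs uh (t - 1))"

definition markov_as_hist :: "real \<Rightarrow> markov_policy \<Rightarrow> hist_policy" where
  "markov_as_hist a \<psi> t h = (case h of (xs, cs, uh) \<Rightarrow> \<psi> t (error_from_history a t xs cs uh) (cs t))"

lemma sim_markov_as_hist: "sim (hist_rule (markov_as_hist a \<psi>)) a xs cs t = sim (markov_rule \<psi>) a xs cs t"
proof (induction t)
  case 0
  show ?case
    by (simp add: hist_rule_def markov_as_hist_def error_from_history_def markov_rule_def)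
next
  case (Suc t)
  let ?uh = "sim_actions (markov_rule \<psi>) a xs cs t"
  have "estimate_from_history a (restrict xs {..Suc t}) (restrict cs {..Suc t}) (restrict ?uh {..<Suc t}) t
      = sim_estimate (markov_rule \<psi>) a xs cs t"
    by (rule estimate_from_history_eq_sim_estimate) (auto simp: sim_actions_eq_act)
  then have "hist_rule (markov_as_hist a \<psi>) (Suc t) xs cs ?uh (xs (Suc t) - a * sim_estimate (markov_rule \<psi>) a xs cs t)
      = markov_rule \<psi> (Suc t) xs cs ?uh (xs (Suc t) - a * sim_estimate (markov_rule \<psi>) a xs cs t)"
    by (simp add: hist_rule_def markov_as_hist_def error_from_history_def markov_rule_def)
  then show ?case
    using Suc.IH by (intro prod_eqI) (simp_all add: sim_actions_Suc sim_estimate_Suc)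
qed

lemma risk_cost_markov_as_hist:
  "risk_cost T a \<sigma> q p01 p10 lam \<gamma> (hist_rule (markov_as_hist a \<psi>)) = risk_cost T a \<sigma> q p01 p10 lam \<gamma> (markov_rule \<psi>)"
proof -
  have "Delta (hist_rule (markov_as_hist a \<psi>)) a xs cs t = Delta (markov_rule \<psi>) a xs cs t"
    "act (hist_rule (markov_as_hist a \<psi>)) a xs cs t = act (markov_rule \<psi>) a xs cs t" for xs cs t
    unfolding Delta_def act_def sim_markov_as_hist by simp_all
  then show ?thesis
    by (simp add: risk_cost_def total_cost_def)
qed

lemma info_space_state_measurable:
  "s \<le> t \<Longrightarrow> (\<lambda>h. fst h s) \<in> borel_measurable (info_space t)"
  unfolding info_space_def by measurable

lemma info_space_channel_measurable:
  "s \<le> t \<Longrightarrow> (\<lambda>h. fst (snd h) s) \<in> info_space t \<rightarrow>\<^sub>M count_space UNIV"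
  unfolding info_space_def by measurable

lemma info_space_action_measurable:
  "s < t \<Longrightarrow> (\<lambda>h. snd (snd h) s) \<in> info_space t \<rightarrow>\<^sub>M count_space UNIV"
  unfolding info_space_def by measurable

lemma estimate_from_history_measurable:
  "s < t \<Longrightarrow> (\<lambda>h. estimate_from_history a (fst h) (fst (snd h)) (snd (snd h)) s) \<in> borel_measurable (info_space t)"
proof (induction s)
  case (Suc s)
  note [measurable] = Suc.IH[OF Suc_lessD[OF Suc.prems]] info_space_state_measurable[of "Suc s" t]
    info_space_channel_measurable[of "Suc s" t] info_space_action_measurable[OF Suc.prems]
  show ?case
    using Suc.prems by simp
qed simp

lemma error_from_history_measurable:
  "(\<lambda>h. error_from_history a t (fst h) (fst (snd h)) (snd (snd h))) \<in> borel_measurable (info_space t)"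
proof (cases "t = 0")
  case False
  then have "t - 1 < t"
    by simp
  note [measurable] = info_space_state_measurable[OF order.refl] estimate_from_history_measurable[OF this]
  show ?thesis
    unfolding error_from_history_def by measurable
qed (simp add: error_from_history_def)

lemma markov_as_hist_in_hist_policies:
  assumes "\<psi> \<in> markov_policies T"
  shows "markov_as_hist a \<psi> \<in> hist_policies T"
  unfolding hist_policies_def
proof (intro CollectI allI impI)
  fix t assume "t \<le> T"
  then have [measurable]: "(\<lambda>(\<delta>, b). \<psi> t \<delta> b) \<in> borel \<Otimes>\<^sub>M count_space UNIV \<rightarrow>\<^sub>M count_space UNIV"
    using assms by (simp add: markov_policies_def)
  note [measurable] = error_from_history_measurable info_space_channel_measurable[OF order.refl]
  have "markov_as_hist a \<psi> t =
      (\<lambda>h. (\<lambda>(\<delta>, b). \<psi> t \<delta> b) (error_from_history a t (fst h) (fst (snd h)) (snd (snd h)), fst (snd h) t))"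
    by (auto simp: markov_as_hist_def fun_eq_iff split: prod.split)
  also have "\<dots> \<in> info_space t \<rightarrow>\<^sub>M count_space UNIV"
    by measurable
  finally show "markov_as_hist a \<psi> t \<in> info_space t \<rightarrow>\<^sub>M count_space UNIV" .
qed

section \<open>Iterated integrals and channel paths\<close>

primrec iter_integral ::
    "'a measure \<Rightarrow> nat \<Rightarrow> nat \<Rightarrow> ((nat \<Rightarrow> 'a) \<Rightarrow> ennreal) \<Rightarrow> (nat \<Rightarrow> 'a) \<Rightarrow> ennreal" where
  "iter_integral M 0 t G w = G w"
| "iter_integral M (Suc m) t G w = (\<integral>\<^sup>+v. iter_integral M m (Suc t) G (w(t := v)) \<partial>M)"

lemma iter_integral_measurable:
  assumes M: "sigma_finite_measure M" and G: "G \<in> borel_measurable (PiM {..<n} (\<lambda>_. M))"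
  shows "t + m = n \<Longrightarrow> iter_integral M m t G \<in> borel_measurable (PiM {..<t} (\<lambda>_. M))"
proof (induction m arbitrary: t)
  case 0
  then show ?case using G by simp
next
  case (Suc m)
  have IH: "iter_integral M m (Suc t) G \<in> borel_measurable (PiM (insert t {..<t}) (\<lambda>_. M))"
    using Suc.IH[of "Suc t"] Suc.prems by (simp add: lessThan_Suc)
  have "(\<lambda>(w, v). w(t := v)) \<in> PiM {..<t} (\<lambda>_. M) \<Otimes>\<^sub>M M \<rightarrow>\<^sub>M PiM (insert t {..<t}) (\<lambda>_. M)"
    using measurable_add_dim[of t "{..<t}" "\<lambda>_. M"] by simp
  from measurable_comp[OF this IH]
  have "(\<lambda>(w, v). iter_integral M m (Suc t) G (w(t := v))) \<in> borel_measurable (PiM {..<t} (\<lambda>_. M) \<Otimes>\<^sub>M M)"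
    by (simp add: comp_def split_beta')
  then show ?case
    using sigma_finite_measure.borel_measurable_nn_integral[OF M] by simp
qed

lemma nn_integral_iter_integral:
  assumes M: "sigma_finite_measure M" and G: "G \<in> borel_measurable (PiM {..<n} (\<lambda>_. M))"
  shows "t + m = n \<Longrightarrow>
    integral\<^sup>N (PiM {..<t} (\<lambda>_. M)) (iter_integral M m t G) = integral\<^sup>N (PiM {..<n} (\<lambda>_. M)) G"
proof (induction m arbitrary: t)
  case 0
  then show ?case by simp
next
  case (Suc m)
  have PM: "product_sigma_finite (\<lambda>_. M)"
    using M by (simp add: product_sigma_finite_def)
  have "iter_integral M m (Suc t) G \<in> borel_measurable (PiM (insert t {..<t}) (\<lambda>_. M))"
    using iter_integral_measurable[OF M G, of "Suc t" m] Suc.prems by (simp add: lessThan_Suc)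
  then have "integral\<^sup>N (PiM {..<t} (\<lambda>_. M)) (iter_integral M (Suc m) t G)
      = integral\<^sup>N (PiM {..<Suc t} (\<lambda>_. M)) (iter_integral M m (Suc t) G)"
    using product_sigma_finite.product_nn_integral_insert[OF PM, of "{..<t}" t]
    by (simp add: lessThan_Suc iter_integral.simps(2)[abs_def])
  also have "\<dots> = integral\<^sup>N (PiM {..<n} (\<lambda>_. M)) G"
    using Suc by simp
  finally show ?case .
qed

lemma iter_integral_eq_nn_integral:
  assumes "sigma_finite_measure M" and "G \<in> borel_measurable (PiM {..<n} (\<lambda>_. M))"
  shows "iter_integral M n 0 G (\<lambda>_. undefined) = integral\<^sup>N (PiM {..<n} (\<lambda>_. M)) G"
proof -
  have "product_sigma_finite (\<lambda>_. M)"
    using assms(1) by (simp add: product_sigma_finite_def)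
  then have "iter_integral M n 0 G (\<lambda>_. undefined) = integral\<^sup>N (PiM {..<0} (\<lambda>_. M)) (iter_integral M n 0 G)"
    unfolding lessThan_0 by (rule product_sigma_finite.nn_integral_empty[symmetric]) (rule zero_le)
  also have "\<dots> = integral\<^sup>N (PiM {..<n} (\<lambda>_. M)) G"
    by (rule nn_integral_iter_integral[OF assms]) simp
  finally show ?thesis .
qed

definition paths_extending :: "nat \<Rightarrow> nat \<Rightarrow> (nat \<Rightarrow> bool) \<Rightarrow> (nat \<Rightarrow> bool) set" where
  "paths_extending m t cs = {cs'. (\<forall>s\<le>t. cs' s = cs s) \<and> (\<forall>s>t + m. \<not> cs' s)}"

definition path_weight :: "(bool \<Rightarrow> bool \<Rightarrow> ennreal) \<Rightarrow> nat \<Rightarrow> nat \<Rightarrow> (nat \<Rightarrow> bool) \<Rightarrow> ennreal" where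
  "path_weight P m t cs = (\<Prod>s\<in>{t..<t + m}. P (cs s) (cs (Suc s)))"

lemma finite_paths_false_after: "finite {cs :: nat \<Rightarrow> bool. \<forall>s>n. \<not> cs s}"
proof (rule finite_surj)
  show "{cs. \<forall>s>n. \<not> cs s} \<subseteq> (\<lambda>S s. s \<in> S) ` Pow {..n}"
  proof
    fix cs :: "nat \<Rightarrow> bool"
    assume "cs \<in> {cs. \<forall>s>n. \<not> cs s}"
    then have "cs = (\<lambda>s. s \<in> {s. s \<le> n \<and> cs s})"
      by (auto simp: fun_eq_iff) (meson not_le)
    then show "cs \<in> (\<lambda>S s. s \<in> S) ` Pow {..n}"
      by (rule image_eqI) auto
  qed
qed simp

lemma finite_paths_extending: "finite (paths_extending m t cs)"
  by (rule finite_subset[OF _ finite_paths_false_after[of "t + m"]]) (auto simp: paths_extending_def)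

lemma paths_extending_0: "\<forall>s>t. \<not> cs s \<Longrightarrow> paths_extending 0 t cs = {cs}"
  unfolding paths_extending_def by (auto simp: fun_eq_iff) (metis not_le)+

lemma paths_extending_Suc:
  "paths_extending (Suc m) t cs = (\<Union>b. paths_extending m (Suc t) (cs(Suc t := b)))"
  by (auto simp: paths_extending_def le_Suc_eq)

lemma sum_paths_extending_Suc:
  "(\<Sum>cs'\<in>paths_extending (Suc m) t cs. f cs') =
     (\<Sum>b\<in>UNIV. \<Sum>cs'\<in>paths_extending m (Suc t) (cs(Suc t := b)). f cs')"
  unfolding paths_extending_Suc
  by (rule sum.UNION_disjoint) (simp_all add: finite_paths_extending, auto simp: paths_extending_def)

lemma path_weight_Suc:
  "path_weight P (Suc m) t cs = P (cs t) (cs (Suc t)) * path_weight P m (Suc t) cs"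
  unfolding path_weight_def by (simp add: prod.atLeast_Suc_lessThan mult.assoc)

text \<open>The conditional expectation of F given the noise samples before t and the channel states up to t,
  for the chain whose noise samples are drawn from M and whose channel moves with weights P.\<close>
primrec tail_expectation ::
    "'a measure \<Rightarrow> (bool \<Rightarrow> bool \<Rightarrow> ennreal) \<Rightarrow> nat \<Rightarrow> nat \<Rightarrow>
      ((nat \<Rightarrow> 'a) \<Rightarrow> (nat \<Rightarrow> bool) \<Rightarrow> ennreal) \<Rightarrow> (nat \<Rightarrow> 'a) \<Rightarrow> (nat \<Rightarrow> bool) \<Rightarrow> ennreal" where
  "tail_expectation M P 0 t F w cs = F w cs"
| "tail_expectation M P (Suc m) t F w cs =
     (\<integral>\<^sup>+v. (\<Sum>b\<in>UNIV. P (cs t) b * tail_expectation M P m (Suc t) F (w(t := v)) (cs(Suc t := b))) \<partial>M)"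

lemma tail_expectation_eq_sum_paths:
  assumes M: "sigma_finite_measure M" and "t + m = n" and "w \<in> space (PiM {..<t} (\<lambda>_. M))"
    and "\<forall>s>t. \<not> cs s"
    and "\<And>cs'. cs' \<in> paths_extending m t cs \<Longrightarrow> F' cs' \<in> borel_measurable (PiM {..<n} (\<lambda>_. M))"
  shows "tail_expectation M P m t (\<lambda>w cs. F' cs w) w cs =
    (\<Sum>cs'\<in>paths_extending m t cs. path_weight P m t cs' * iter_integral M m t (F' cs') w)"
  using assms(2-)
proof (induction m arbitrary: t w cs)
  case 0
  then show ?case by (simp add: paths_extending_0 path_weight_def)
next
  case (Suc m)
  have sub: "paths_extending m (Suc t) (cs(Suc t := b)) \<subseteq> paths_extending (Suc m) t cs" for b
    by (auto simp: paths_extending_Suc)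
  have meas: "(\<lambda>v. iter_integral M m (Suc t) (F' cs') (w(t := v))) \<in> borel_measurable M"
    if "cs' \<in> paths_extending m (Suc t) (cs(Suc t := b))" for cs' b
  proof -
    have "iter_integral M m (Suc t) (F' cs') \<in> borel_measurable (PiM (insert t {..<t}) (\<lambda>_. M))"
      using iter_integral_measurable[OF M Suc.prems(4), of cs' "Suc t" m] sub that Suc.prems(1)
      by (auto simp: lessThan_Suc)
    then show ?thesis
      using measurable_comp[OF measurable_component_update[OF Suc.prems(2), of t]] by (simp add: comp_def)
  qed
  have IH: "tail_expectation M P m (Suc t) (\<lambda>w cs. F' cs w) (w(t := v)) (cs(Suc t := b)) =
     (\<Sum>cs'\<in>paths_extending m (Suc t) (cs(Suc t := b)).
        path_weight P m (Suc t) cs' * iter_integral M m (Suc t) (F' cs') (w(t := v)))"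
    if "v \<in> space M" for v b
  proof (rule Suc.IH)
    show "Suc t + m = n"
      using Suc.prems(1) by simp
    show "w(t := v) \<in> space (PiM {..<Suc t} (\<lambda>_. M))"
      using Suc.prems(2) that by (auto simp: space_PiM PiE_iff extensional_def)
    show "\<forall>s>Suc t. \<not> (cs(Suc t := b)) s"
      using Suc.prems(3) by simp
    show "F' cs' \<in> borel_measurable (PiM {..<n} (\<lambda>_. M))"
      if "cs' \<in> paths_extending m (Suc t) (cs(Suc t := b))" for cs'
      using Suc.prems(4) sub that by blast
  qed
  have "tail_expectation M P (Suc m) t (\<lambda>w cs. F' cs w) w cs =
      (\<integral>\<^sup>+v. (\<Sum>b\<in>UNIV. \<Sum>cs'\<in>paths_extending m (Suc t) (cs(Suc t := b)).
        P (cs t) b * path_weight P m (Suc t) cs' * iter_integral M m (Suc t) (F' cs') (w(t := v))) \<partial>M)"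
    unfolding tail_expectation.simps by (intro nn_integral_cong) (simp add: IH sum_distrib_left mult.assoc)
  also have "\<dots> = (\<Sum>b\<in>UNIV. \<Sum>cs'\<in>paths_extending m (Suc t) (cs(Suc t := b)).
      P (cs t) b * path_weight P m (Suc t) cs' * \<integral>\<^sup>+v. iter_integral M m (Suc t) (F' cs') (w(t := v)) \<partial>M)"
    using meas by (simp add: nn_integral_sum nn_integral_cmult finite_paths_extending)
  also have "\<dots> = (\<Sum>cs'\<in>paths_extending (Suc m) t cs.
      path_weight P (Suc m) t cs' * iter_integral M (Suc m) t (F' cs') w)"
    unfolding sum_paths_extending_Suc
    by (intro sum.cong refl) (simp add: path_weight_Suc paths_extending_def mult.assoc)
  finally show ?case .
qed

section \<open>The model as an iterated expectation\<close>

locale remote_estimation =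
  fixes T :: nat and a \<sigma> q p01 p10 lam \<gamma> :: real
  assumes sigma_pos: "\<sigma> > 0" and lam_pos: "lam > 0" and gamma_pos: "\<gamma> > 0"
    and q_nonneg: "0 \<le> q" and q_le_1: "q \<le> 1"
    and p01_nonneg: "0 \<le> p01" and p01_le_1: "p01 \<le> 1"
    and p10_nonneg: "0 \<le> p10" and p10_le_1: "p10 \<le> 1"
begin

definition noise :: "real measure" where
  "noise = density lborel (normal_density 0 \<sigma>)"

definition init_law :: "real measure" where
  "init_law = density lborel (normal_density 0 1)"

abbreviation noise_paths :: "nat \<Rightarrow> (nat \<Rightarrow> real) measure" where
  "noise_paths n \<equiv> PiM {..<n} (\<lambda>_. noise)"

abbreviation channel :: "(nat \<Rightarrow> bool) measure" where
  "channel \<equiv> chan_measure T q p01 p10"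

abbreviation channel_paths :: "(nat \<Rightarrow> bool) set" where
  "channel_paths \<equiv> {cs. \<forall>t>T. cs t = False}"

definition trans_weight :: "bool \<Rightarrow> bool \<Rightarrow> ennreal" where
  "trans_weight c b = ennreal (chan_trans p01 p10 c b)"

definition init_weight :: "bool \<Rightarrow> ennreal" where
  "init_weight b = ennreal (if b then q else 1 - q)"

abbreviation tail_exp where
  "tail_exp \<equiv> tail_expectation noise trans_weight"

lemma sigma_finite_noise: "sigma_finite_measure noise"
  unfolding noise_def using sigma_pos by (intro prob_space_imp_sigma_finite prob_space_normal_density)

lemma space_noise [simp]: "space noise = UNIV"
  by (simp add: noise_def)

lemma sets_noise [measurable_cong, simp]: "sets noise = sets borel"
  by (simp add: noise_def)

lemma sets_init_law [measurable_cong]: "sets init_law = sets borel"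
  by (simp add: init_law_def)

lemma sigma_finite_noise_paths: "sigma_finite_measure (noise_paths n)"
  unfolding noise_def using sigma_pos
  by (intro prob_space_imp_sigma_finite prob_space_PiM prob_space_normal_density)

lemma model_eq: "model T \<sigma> q p01 p10 = init_law \<Otimes>\<^sub>M (noise_paths T \<Otimes>\<^sub>M channel)"
  by (simp add: model_def init_law_def noise_def)

lemma finite_channel_paths: "finite channel_paths"
  using finite_paths_false_after by simp

lemma space_channel [simp]: "space channel = channel_paths"
  by (simp add: chan_measure_def space_point_measure)

lemma sets_channel: "sets channel = Pow channel_paths"
  by (simp add: chan_measure_def sets_point_measure_count_space)

lemma chan_trans_nonneg: "0 \<le> chan_trans p01 p10 c b"
  using p01_nonneg p01_le_1 p10_nonneg p10_le_1 by (auto simp: chan_trans_def)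

lemma channel_density_eq:
  "ennreal ((if cs 0 then q else 1 - q) * (\<Prod>t<T. chan_trans p01 p10 (cs t) (cs (Suc t))))
     = init_weight (cs 0) * path_weight trans_weight T 0 cs"
  using q_nonneg q_le_1 chan_trans_nonneg
  by (simp add: ennreal_mult prod_nonneg prod_ennreal init_weight_def trans_weight_def
      path_weight_def atLeast0LessThan)

lemma sigma_finite_channel: "sigma_finite_measure channel"
proof -
  have "emeasure channel (space channel) =
      (\<Sum>cs\<in>channel_paths. ennreal ((if cs 0 then q else 1 - q) * (\<Prod>t<T. chan_trans p01 p10 (cs t) (cs (Suc t)))))"
    unfolding space_channel unfolding chan_measure_def
    by (rule emeasure_point_measure_finite[OF finite_channel_paths]) simp
  also have "\<dots> \<noteq> \<infinity>"
    using finite_channel_paths by simp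
  finally show ?thesis
    by (intro finite_measure.axioms(1) finite_measureI)
qed

lemma channel_paths_eq_Union: "channel_paths = (\<Union>b. paths_extending T 0 ((\<lambda>_. False)(0 := b)))"
proof (intro set_eqI iffI)
  fix cs assume "cs \<in> channel_paths"
  then have "cs \<in> paths_extending T 0 ((\<lambda>_. False)(0 := cs 0))"
    by (auto simp: paths_extending_def)
  then show "cs \<in> (\<Union>b. paths_extending T 0 ((\<lambda>_. False)(0 := b)))"
    by blast
qed (auto simp: paths_extending_def)

lemma nn_integral_model:
  assumes F: "F \<in> borel_measurable (model T \<sigma> q p01 p10)"
  shows "(\<integral>\<^sup>+\<omega>. F \<omega> \<partial>model T \<sigma> q p01 p10) =
    (\<integral>\<^sup>+x0. (\<Sum>b\<in>UNIV. init_weight b *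
       tail_exp T 0 (\<lambda>w cs. F (x0, w, cs)) (\<lambda>_. undefined) ((\<lambda>_. False)(0 := b))) \<partial>init_law)"
proof -
  have F': "F \<in> borel_measurable (init_law \<Otimes>\<^sub>M (noise_paths T \<Otimes>\<^sub>M channel))"
    using F by (simp add: model_eq)
  have sf: "sigma_finite_measure (noise_paths T \<Otimes>\<^sub>M channel)" "pair_sigma_finite (noise_paths T) channel"
    using sigma_finite_noise_paths sigma_finite_channel
    by (auto intro: sigma_finite_pair_measure simp: pair_sigma_finite_def)
  have mx: "(\<lambda>y. F (x0, y)) \<in> borel_measurable (noise_paths T \<Otimes>\<^sub>M channel)" for x0
    by (rule measurable_comp[OF _ F', unfolded comp_def]) (auto simp: init_law_def)
  have mw: "(\<lambda>w. F (x0, w, cs)) \<in> borel_measurable (noise_paths T)" if "cs \<in> channel_paths" for x0 cs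
    by (rule measurable_comp[OF _ mx, unfolded comp_def]) (use that in auto)
  have inner: "(\<integral>\<^sup>+y. F (x0, y) \<partial>(noise_paths T \<Otimes>\<^sub>M channel)) =
      (\<Sum>b\<in>UNIV. init_weight b * tail_exp T 0 (\<lambda>w cs. F (x0, w, cs)) (\<lambda>_. undefined) ((\<lambda>_. False)(0 := b)))"
    for x0
  proof -
    have "(\<integral>\<^sup>+y. F (x0, y) \<partial>(noise_paths T \<Otimes>\<^sub>M channel)) =
        (\<integral>\<^sup>+cs. \<integral>\<^sup>+w. F (x0, w, cs) \<partial>noise_paths T \<partial>channel)"
      using pair_sigma_finite.nn_integral_snd[OF sf(2) mx[of x0]] by simp
    also have "\<dots> = (\<Sum>cs\<in>channel_paths. init_weight (cs 0) * path_weight trans_weight T 0 cs *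
        (\<integral>\<^sup>+w. F (x0, w, cs) \<partial>noise_paths T))"
      unfolding chan_measure_def
      by (subst nn_integral_point_measure_finite[OF finite_channel_paths]) (simp_all add: channel_density_eq)
    also have "\<dots> = (\<Sum>b\<in>UNIV. \<Sum>cs\<in>paths_extending T 0 ((\<lambda>_. False)(0 := b)).
        init_weight (cs 0) * path_weight trans_weight T 0 cs * (\<integral>\<^sup>+w. F (x0, w, cs) \<partial>noise_paths T))"
      unfolding channel_paths_eq_Union
      by (rule sum.UNION_disjoint) (simp_all add: finite_paths_extending, auto simp: paths_extending_def)
    also have "\<dots> = (\<Sum>b\<in>UNIV. init_weight b * (\<Sum>cs\<in>paths_extending T 0 ((\<lambda>_. False)(0 := b)).
        path_weight trans_weight T 0 cs * iter_integral noise T 0 (\<lambda>w. F (x0, w, cs)) (\<lambda>_. undefined)))"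
      unfolding sum_distrib_left
      by (intro sum.cong refl)
        (auto simp: paths_extending_def mult.assoc iter_integral_eq_nn_integral[OF sigma_finite_noise] mw)
    also have "\<dots> = (\<Sum>b\<in>UNIV. init_weight b *
        tail_exp T 0 (\<lambda>w cs. F (x0, w, cs)) (\<lambda>_. undefined) ((\<lambda>_. False)(0 := b)))"
      by (subst tail_expectation_eq_sum_paths[OF sigma_finite_noise, where n = T])
        (auto simp: space_PiM paths_extending_def mw)
    finally show ?thesis .
  qed
  show ?thesis
    unfolding model_eq
    by (simp add: sigma_finite_measure.nn_integral_fst[OF sf(1) F', symmetric] inner)
qed

section \<open>Dynamic programming\<close>

definition stage_factor :: "real \<Rightarrow> bool \<Rightarrow> bool \<Rightarrow> ennreal" where
  "stage_factor \<delta> c u = ennreal (exp (\<gamma> * stage_cost lam \<delta> c u))"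

text \<open>The expectation of V at the next state from the state (\<delta>, c): the next error is the fresh
  noise sample if the estimate was reset (r), and a * \<delta> plus that sample otherwise.\<close>
definition next_expectation :: "(real \<Rightarrow> bool \<Rightarrow> ennreal) \<Rightarrow> real \<Rightarrow> bool \<Rightarrow> bool \<Rightarrow> ennreal" where
  "next_expectation V \<delta> c r = (\<integral>\<^sup>+v. (\<Sum>b\<in>UNIV. trans_weight c b * V (if r then v else a * \<delta> + v) b) \<partial>noise)"

primrec opt_value :: "nat \<Rightarrow> real \<Rightarrow> bool \<Rightarrow> ennreal" where
  "opt_value 0 \<delta> c = min (stage_factor \<delta> c False) (stage_factor \<delta> c True)"
| "opt_value (Suc k) \<delta> c =
     min (stage_factor \<delta> c False * next_expectation (opt_value k) \<delta> c False)
         (stage_factor \<delta> c True * next_expectation (opt_value k) \<delta> c c)"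

definition action_value :: "nat \<Rightarrow> real \<Rightarrow> bool \<Rightarrow> bool \<Rightarrow> ennreal" where
  "action_value k \<delta> c u = (case k of
     0 \<Rightarrow> stage_factor \<delta> c u
   | Suc j \<Rightarrow> stage_factor \<delta> c u * next_expectation (opt_value j) \<delta> c (u \<and> c))"

lemma opt_value_eq_min: "opt_value k \<delta> c = min (action_value k \<delta> c False) (action_value k \<delta> c True)"
  by (cases k) (simp_all add: action_value_def)

lemma opt_value_le_action_value: "opt_value k \<delta> c \<le> action_value k \<delta> c u"
  by (cases u) (simp_all add: opt_value_eq_min)

definition opt_policy :: markov_policy where
  "opt_policy t \<delta> c \<longleftrightarrow> 0 < t \<and> action_value (T - t) \<delta> c True < action_value (T - t) \<delta> c False"

lemma action_value_opt_policy:
  "0 < t \<Longrightarrow> action_value (T - t) \<delta> c (opt_policy t \<delta> c) = opt_value (T - t) \<delta> c"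
  by (cases "action_value (T - t) \<delta> c True < action_value (T - t) \<delta> c False")
    (auto simp: opt_policy_def opt_value_eq_min min_def)

lemma stage_factor_measurable [measurable]: "(\<lambda>\<delta>. stage_factor \<delta> c u) \<in> borel_measurable borel"
  unfolding stage_factor_def stage_cost_def by measurable

lemma next_expectation_measurable [measurable]:
  assumes [measurable]: "\<And>b. (\<lambda>\<delta>. V \<delta> b) \<in> borel_measurable borel"
  shows "(\<lambda>\<delta>. next_expectation V \<delta> c r) \<in> borel_measurable borel"
proof -
  have "(\<lambda>(\<delta>, v). \<Sum>b\<in>UNIV. trans_weight c b * V (if r then v else a * \<delta> + v) b)
      \<in> borel_measurable (borel \<Otimes>\<^sub>M noise)"
    by measurable
  from sigma_finite_measure.borel_measurable_nn_integral[OF sigma_finite_noise this] show ?thesis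
    unfolding next_expectation_def by simp
qed

lemma opt_value_measurable [measurable]: "(\<lambda>\<delta>. opt_value k \<delta> c) \<in> borel_measurable borel"
proof (induction k arbitrary: c)
  case (Suc k)
  note Suc [measurable]
  show ?case by simp
qed simp

lemma action_value_measurable [measurable]: "(\<lambda>\<delta>. action_value k \<delta> c u) \<in> borel_measurable borel"
  unfolding action_value_def by (cases k) simp_all

lemma opt_policy_in_markov_policies: "opt_policy \<in> markov_policies T"
  unfolding markov_policies_def
proof (intro CollectI allI impI)
  fix t
  have "(\<lambda>x. opt_policy t (fst x) b) \<in> borel \<Otimes>\<^sub>M count_space UNIV \<rightarrow>\<^sub>M count_space UNIV" for b
    unfolding opt_policy_def by measurable
  then have "(\<lambda>x. opt_policy t (fst x) (snd x)) \<in> borel \<Otimes>\<^sub>M count_space UNIV \<rightarrow>\<^sub>M count_space UNIV"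
    by (rule measurable_compose_countable'[where I = UNIV]) auto
  then show "(\<lambda>(\<delta>, b). opt_policy t \<delta> b) \<in> borel \<Otimes>\<^sub>M count_space UNIV \<rightarrow>\<^sub>M count_space UNIV"
    by (simp add: split_beta')
qed

lemma next_expectation_cmult:
  "K * next_expectation (opt_value k) \<delta> c r =
     (\<integral>\<^sup>+v. (\<Sum>b\<in>UNIV. trans_weight c b * (K * opt_value k (if r then v else a * \<delta> + v) b)) \<partial>noise)"
  unfolding next_expectation_def
  by (subst nn_integral_cmult[symmetric]) (simp_all add: sum_distrib_left mult.left_commute)

definition stage_cost_at :: "rule \<Rightarrow> real \<Rightarrow> (nat \<Rightarrow> real) \<Rightarrow> (nat \<Rightarrow> bool) \<Rightarrow> nat \<Rightarrow> real" where
  "stage_cost_at g x0 w cs s =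
     stage_cost lam (Delta g a (xproc a x0 w) cs s) (cs s) (act g a (xproc a x0 w) cs s)"

definition cost_factor :: "rule \<Rightarrow> real \<Rightarrow> (nat \<Rightarrow> real) \<Rightarrow> (nat \<Rightarrow> bool) \<Rightarrow> nat \<Rightarrow> ennreal" where
  "cost_factor g x0 w cs t = ennreal (exp (\<gamma> * (\<Sum>s<t. stage_cost_at g x0 w cs s)))"

lemma exp_total_cost_eq_cost_factor:
  "ennreal (exp (\<gamma> * total_cost T a lam g (x0, w, cs))) = cost_factor g x0 w cs (Suc T)"
  by (simp add: total_cost_def cost_factor_def stage_cost_at_def lessThan_Suc_atMost Let_def)

lemma cost_factor_Suc:
  "cost_factor g x0 w cs (Suc t) = cost_factor g x0 w cs t *
     stage_factor (Delta g a (xproc a x0 w) cs t) (cs t) (act g a (xproc a x0 w) cs t)"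
  by (simp add: cost_factor_def stage_factor_def stage_cost_at_def distrib_left exp_add ennreal_mult)

lemma one_le_cost_factor: "1 \<le> cost_factor g x0 w cs t"
proof -
  have "0 \<le> stage_cost_at g x0 w cs s" for s
    using lam_pos by (simp add: stage_cost_at_def stage_cost_def)
  then show ?thesis
    using gamma_pos by (simp add: cost_factor_def ennreal_ge_1 sum_nonneg)
qed

lemma cost_factor_fun_upd:
  assumes g: "causal g"
  shows "cost_factor g x0 (w(t := v)) (cs(Suc t := b)) (Suc t) = cost_factor g x0 w cs (Suc t)"
proof -
  have "stage_cost_at g x0 (w(t := v)) (cs(Suc t := b)) s = stage_cost_at g x0 w cs s" if "s \<le> t" for s
  proof -
    have x: "xproc a x0 (w(t := v)) s' = xproc a x0 w s'" if "s' \<le> s" for s'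
      using that \<open>s \<le> t\<close> by (auto intro: xproc_causal)
    have c: "(cs(Suc t := b)) s' = cs s'" if "s' \<le> s" for s'
      using that \<open>s \<le> t\<close> by simp
    have "Delta g a (xproc a x0 (w(t := v))) (cs(Suc t := b)) s = Delta g a (xproc a x0 w) cs s"
      by (rule Delta_causal[OF g]) (use x c in auto)
    moreover have "act g a (xproc a x0 (w(t := v))) (cs(Suc t := b)) s = act g a (xproc a x0 w) cs s"
      by (rule act_causal[OF g]) (use x c in auto)
    ultimately show ?thesis
      unfolding stage_cost_at_def using c[of s] by simp
  qed
  then show ?thesis
    by (simp add: cost_factor_def)
qed

lemma cost_factor_action_value_Suc:
  assumes g: "causal g" and t: "0 < t"
  shows "cost_factor g x0 w cs t *
      action_value (Suc m) (Delta g a (xproc a x0 w) cs t) (cs t) (act g a (xproc a x0 w) cs t) =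
    (\<integral>\<^sup>+v. (\<Sum>b\<in>UNIV. trans_weight (cs t) b *
       (cost_factor g x0 (w(t := v)) (cs(Suc t := b)) (Suc t) *
        opt_value m (Delta g a (xproc a x0 (w(t := v))) (cs(Suc t := b)) (Suc t)) b)) \<partial>noise)"
proof -
  let ?xs = "xproc a x0 w"
  have "cost_factor g x0 w cs t *
      action_value (Suc m) (Delta g a ?xs cs t) (cs t) (act g a ?xs cs t) =
    cost_factor g x0 w cs (Suc t) *
      next_expectation (opt_value m) (Delta g a ?xs cs t) (cs t) (act g a ?xs cs t \<and> cs t)"
    by (simp add: action_value_def cost_factor_Suc mult.assoc)
  also have "\<dots> = (\<integral>\<^sup>+v. (\<Sum>b\<in>UNIV. trans_weight (cs t) b * (cost_factor g x0 w cs (Suc t) *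
      opt_value m (if act g a ?xs cs t \<and> cs t then v else a * Delta g a ?xs cs t + v) b)) \<partial>noise)"
    by (rule next_expectation_cmult)
  finally show ?thesis
    by (simp only: cost_factor_fun_upd[OF g] Delta_Suc_fun_upd[OF g t])
qed

lemma cost_factor_opt_value_le_tail_exp:
  assumes g: "causal g"
  shows "t + m = T \<Longrightarrow> 0 < t \<Longrightarrow>
    cost_factor g x0 w cs t * opt_value m (Delta g a (xproc a x0 w) cs t) (cs t)
      \<le> tail_exp m t (\<lambda>w cs. cost_factor g x0 w cs (Suc T)) w cs"
proof (induction m arbitrary: t w cs)
  case 0
  then show ?case
    using opt_value_le_action_value[of 0]
    by (simp add: action_value_def cost_factor_Suc mult_left_mono)
next
  case (Suc m)
  let ?xs = "xproc a x0 w"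
  have "cost_factor g x0 w cs t * opt_value (Suc m) (Delta g a ?xs cs t) (cs t) \<le>
      cost_factor g x0 w cs t * action_value (Suc m) (Delta g a ?xs cs t) (cs t) (act g a ?xs cs t)"
    by (intro mult_left_mono opt_value_le_action_value) simp
  also have "\<dots> \<le> tail_exp (Suc m) t (\<lambda>w cs. cost_factor g x0 w cs (Suc T)) w cs"
  proof -
    have "cost_factor g x0 (w(t := v)) (cs(Suc t := b)) (Suc t) *
        opt_value m (Delta g a (xproc a x0 (w(t := v))) (cs(Suc t := b)) (Suc t)) ((cs(Suc t := b)) (Suc t))
      \<le> tail_exp m (Suc t) (\<lambda>w cs. cost_factor g x0 w cs (Suc T)) (w(t := v)) (cs(Suc t := b))" for v b
      by (rule Suc.IH) (use Suc.prems(1) in simp_all)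
    then show ?thesis
      unfolding cost_factor_action_value_Suc[OF g Suc.prems(2)] tail_expectation.simps
      by (intro nn_integral_mono sum_mono mult_left_mono) simp_all
  qed
  finally show ?case .
qed

abbreviation opt_rule :: rule where
  "opt_rule \<equiv> markov_rule opt_policy"

lemma cost_factor_opt_value_eq_tail_exp:
  "t + m = T \<Longrightarrow> 0 < t \<Longrightarrow>
    cost_factor opt_rule x0 w cs t * opt_value m (Delta opt_rule a (xproc a x0 w) cs t) (cs t)
      = tail_exp m t (\<lambda>w cs. cost_factor opt_rule x0 w cs (Suc T)) w cs"
proof (induction m arbitrary: t w cs)
  case 0
  then show ?case
    using action_value_opt_policy[of t]
    by (simp add: act_markov_rule action_value_def cost_factor_Suc)
next
  case (Suc m)
  let ?xs = "xproc a x0 w"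
  have "T - t = Suc m"
    using Suc.prems(1) by simp
  then have "opt_value (Suc m) (Delta opt_rule a ?xs cs t) (cs t) =
      action_value (Suc m) (Delta opt_rule a ?xs cs t) (cs t) (act opt_rule a ?xs cs t)"
    using action_value_opt_policy[OF Suc.prems(2)] by (simp add: act_markov_rule)
  moreover have "cost_factor opt_rule x0 (w(t := v)) (cs(Suc t := b)) (Suc t) *
      opt_value m (Delta opt_rule a (xproc a x0 (w(t := v))) (cs(Suc t := b)) (Suc t)) ((cs(Suc t := b)) (Suc t))
    = tail_exp m (Suc t) (\<lambda>w cs. cost_factor opt_rule x0 w cs (Suc T)) (w(t := v)) (cs(Suc t := b))" for v b
    by (rule Suc.IH) (use Suc.prems(1) in simp_all)
  ultimately show ?case
    by (simp only: cost_factor_action_value_Suc[OF causal_markov_rule Suc.prems(2)] tail_expectation.simps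
        fun_upd_same)
qed

text \<open>At time 0 the error is 0 by convention, so the next error is a * x(0) + w(0) regardless of u(0).\<close>
definition initial_value :: "real \<Rightarrow> bool \<Rightarrow> ennreal" where
  "initial_value x0 c = (case T of 0 \<Rightarrow> 1 | Suc k \<Rightarrow> next_expectation (opt_value k) x0 c False)"

lemma initial_value_Suc: "T = Suc m \<Longrightarrow> initial_value x0 c = next_expectation (opt_value m) x0 c False"
  unfolding initial_value_def by simp

lemma initial_value_le_tail_exp:
  assumes g: "causal g"
  shows "initial_value x0 (cs 0) \<le> tail_exp T 0 (\<lambda>w cs. cost_factor g x0 w cs (Suc T)) w cs"
proof (cases T)
  case 0
  then show ?thesis
    unfolding initial_value_def using one_le_cost_factor by simp
next
  case (Suc m)
  then have horizon: "Suc 0 + m = T" "0 < Suc 0"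
    by simp_all
  have step: "opt_value m (a * x0 + v) b \<le>
      tail_exp m (Suc 0) (\<lambda>w cs. cost_factor g x0 w cs (Suc T)) (w(0 := v)) (cs(Suc 0 := b))" for v b
  proof -
    have "opt_value m (a * x0 + v) b \<le>
        cost_factor g x0 (w(0 := v)) (cs(Suc 0 := b)) (Suc 0) * opt_value m (a * x0 + v) b"
      using mult_right_mono[OF one_le_cost_factor, of "opt_value m (a * x0 + v) b"] by simp
    also have "\<dots> \<le> tail_exp m (Suc 0) (\<lambda>w cs. cost_factor g x0 w cs (Suc T)) (w(0 := v)) (cs(Suc 0 := b))"
      using cost_factor_opt_value_le_tail_exp[OF g horizon, of x0 "w(0 := v)" "cs(Suc 0 := b)"]
      by (simp add: Delta_one)
    finally show ?thesis .
  qed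
  have head: "tail_exp T = tail_exp (Suc m)"
    using Suc by simp
  show ?thesis
    unfolding initial_value_Suc[OF Suc] head tail_expectation.simps next_expectation_def
    using step by (intro nn_integral_mono sum_mono mult_left_mono) simp_all
qed

lemma cost_factor_opt_rule_one: "cost_factor opt_rule x0 w cs (Suc 0) = 1"
  by (simp add: cost_factor_def stage_cost_at_def act_markov_rule opt_policy_def stage_cost_def)

lemma initial_value_eq_tail_exp_opt_rule:
  "initial_value x0 (cs 0) = tail_exp T 0 (\<lambda>w cs. cost_factor opt_rule x0 w cs (Suc T)) w cs"
proof (cases T)
  case 0
  then show ?thesis
    unfolding initial_value_def using cost_factor_opt_rule_one by simp
next
  case (Suc m)
  then have horizon: "Suc 0 + m = T" "0 < Suc 0"
    by simp_all
  have step: "opt_value m (a * x0 + v) b =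
      tail_exp m (Suc 0) (\<lambda>w cs. cost_factor opt_rule x0 w cs (Suc T)) (w(0 := v)) (cs(Suc 0 := b))" for v b
    using cost_factor_opt_value_eq_tail_exp[OF horizon, of x0 "w(0 := v)" "cs(Suc 0 := b)"]
    by (simp add: Delta_one cost_factor_opt_rule_one)
  have head: "tail_exp T = tail_exp (Suc m)"
    using Suc by simp
  show ?thesis
    unfolding initial_value_Suc[OF Suc] head tail_expectation.simps next_expectation_def
    by (simp add: step)
qed

text \<open>Stated for arbitrary measurable inputs so that it propagates through the recursion of sim.\<close>
definition measurable_rule :: "'m measure \<Rightarrow> rule \<Rightarrow> (nat \<Rightarrow> bool) \<Rightarrow> bool" where
  "measurable_rule M g cs \<longleftrightarrow> (\<forall>t\<le>T. \<forall>X uh D. (\<forall>s\<le>t. (\<lambda>\<omega>. X \<omega> s) \<in> borel_measurable M)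
      \<longrightarrow> (\<forall>s<t. (\<lambda>\<omega>. uh \<omega> s) \<in> M \<rightarrow>\<^sub>M count_space UNIV) \<longrightarrow> D \<in> borel_measurable M
      \<longrightarrow> (\<lambda>\<omega>. g t (X \<omega>) cs (uh \<omega>) (D \<omega>)) \<in> M \<rightarrow>\<^sub>M count_space UNIV)"

lemma measurable_ruleD:
  assumes "measurable_rule M g cs" "t \<le> T" "\<And>s. s \<le> t \<Longrightarrow> (\<lambda>\<omega>. X \<omega> s) \<in> borel_measurable M"
    "\<And>s. s < t \<Longrightarrow> (\<lambda>\<omega>. uh \<omega> s) \<in> M \<rightarrow>\<^sub>M count_space UNIV" "D \<in> borel_measurable M"
  shows "(\<lambda>\<omega>. g t (X \<omega>) cs (uh \<omega>) (D \<omega>)) \<in> M \<rightarrow>\<^sub>M count_space UNIV"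
  using assms unfolding measurable_rule_def by blast

lemma measurable_rule_hist_rule:
  fixes M :: "'m measure"
  assumes "\<phi> \<in> hist_policies T"
  shows "measurable_rule M (hist_rule \<phi>) cs"
  unfolding measurable_rule_def
proof (intro allI impI)
  fix t and X :: "'m \<Rightarrow> nat \<Rightarrow> real" and uh :: "'m \<Rightarrow> nat \<Rightarrow> bool" and D :: "'m \<Rightarrow> real"
  assume t: "t \<le> T" and X: "\<forall>s\<le>t. (\<lambda>\<omega>. X \<omega> s) \<in> borel_measurable M"
    and uh: "\<forall>s<t. (\<lambda>\<omega>. uh \<omega> s) \<in> M \<rightarrow>\<^sub>M count_space UNIV"
  have "\<phi> t \<in> info_space t \<rightarrow>\<^sub>M count_space UNIV"
    using assms t by (simp add: hist_policies_def)
  moreover have "(\<lambda>\<omega>. (restrict (X \<omega>) {..t}, restrict cs {..t}, restrict (uh \<omega>) {..<t})) \<in> M \<rightarrow>\<^sub>M info_space t"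
    unfolding info_space_def by (intro measurable_Pair measurable_restrict) (use X uh in auto)
  ultimately show "(\<lambda>\<omega>. hist_rule \<phi> t (X \<omega>) cs (uh \<omega>) (D \<omega>)) \<in> M \<rightarrow>\<^sub>M count_space UNIV"
    unfolding hist_rule_def by (simp add: measurable_compose)
qed

lemma measurable_rule_markov_rule:
  fixes M :: "'m measure"
  assumes "\<psi> \<in> markov_policies T"
  shows "measurable_rule M (markov_rule \<psi>) cs"
  unfolding measurable_rule_def
proof (intro allI impI)
  fix t and X :: "'m \<Rightarrow> nat \<Rightarrow> real" and uh :: "'m \<Rightarrow> nat \<Rightarrow> bool" and D :: "'m \<Rightarrow> real"
  assume "t \<le> T" and [measurable]: "D \<in> borel_measurable M"
  then have "(\<lambda>(\<delta>, b). \<psi> t \<delta> b) \<in> borel \<Otimes>\<^sub>M count_space UNIV \<rightarrow>\<^sub>M count_space UNIV"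
    using assms by (simp add: markov_policies_def)
  moreover have "(\<lambda>\<omega>. (D \<omega>, cs t)) \<in> M \<rightarrow>\<^sub>M borel \<Otimes>\<^sub>M count_space UNIV"
    by measurable
  ultimately show "(\<lambda>\<omega>. markov_rule \<psi> t (X \<omega>) cs (uh \<omega>) (D \<omega>)) \<in> M \<rightarrow>\<^sub>M count_space UNIV"
    unfolding markov_rule_def using measurable_compose by fastforce
qed

lemma sim_measurable:
  assumes g: "measurable_rule M g cs" and X: "\<And>s. s \<le> T \<Longrightarrow> (\<lambda>\<omega>. X \<omega> s) \<in> borel_measurable M"
  shows "t \<le> T \<Longrightarrow> (\<lambda>\<omega>. sim_estimate g a (X \<omega>) cs t) \<in> borel_measurable M \<and>
     (\<forall>s. (\<lambda>\<omega>. sim_actions g a (X \<omega>) cs t s) \<in> M \<rightarrow>\<^sub>M count_space UNIV)"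
proof (induction t)
  case 0
  have "(\<lambda>\<omega>. g 0 (X \<omega>) cs ((\<lambda>\<omega> _. False) \<omega>) ((\<lambda>\<omega>. 0) \<omega>)) \<in> M \<rightarrow>\<^sub>M count_space UNIV"
    by (rule measurable_ruleD[OF g]) (use X in auto)
  then show ?case
    by simp
next
  case (Suc t)
  then have [measurable]: "(\<lambda>\<omega>. sim_estimate g a (X \<omega>) cs t) \<in> borel_measurable M"
    and uh: "\<And>s. (\<lambda>\<omega>. sim_actions g a (X \<omega>) cs t s) \<in> M \<rightarrow>\<^sub>M count_space UNIV"
    by auto
  have [measurable]: "(\<lambda>\<omega>. X \<omega> (Suc t)) \<in> borel_measurable M"
    using X Suc.prems .
  have [measurable]: "(\<lambda>\<omega>. g (Suc t) (X \<omega>) cs (sim_actions g a (X \<omega>) cs t) (X \<omega> (Suc t) - a * sim_estimate g a (X \<omega>) cs t))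
      \<in> M \<rightarrow>\<^sub>M count_space UNIV"
    by (rule measurable_ruleD[OF g Suc.prems]) (use X Suc.prems uh in auto)
  have "(\<lambda>\<omega>. sim_actions g a (X \<omega>) cs (Suc t) s) \<in> M \<rightarrow>\<^sub>M count_space UNIV" for s
    using uh[of s] by (cases "s = Suc t") (simp_all add: sim_actions_Suc)
  moreover have "(\<lambda>\<omega>. sim_estimate g a (X \<omega>) cs (Suc t)) \<in> borel_measurable M"
    unfolding sim_estimate_Suc by measurable
  ultimately show ?case
    by blast
qed

lemma xproc_measurable:
  "s \<le> T \<Longrightarrow> (\<lambda>\<omega>. xproc a (fst \<omega>) (fst (snd \<omega>)) s) \<in> borel_measurable (model T \<sigma> q p01 p10)"
proof (induction s)
  case 0
  show ?case
    unfolding model_eq xproc.simps by measurable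
next
  case (Suc s)
  then have "s \<in> {..<T}"
    by simp
  then have [measurable]: "(\<lambda>\<omega>. fst (snd \<omega>) s) \<in> borel_measurable (model T \<sigma> q p01 p10)"
    unfolding model_eq by measurable
  from Suc have [measurable]: "(\<lambda>\<omega>. xproc a (fst \<omega>) (fst (snd \<omega>)) s) \<in> borel_measurable (model T \<sigma> q p01 p10)"
    by simp
  show ?case
    unfolding xproc.simps by measurable
qed

lemma stage_cost_measurable:
  assumes g: "measurable_rule (model T \<sigma> q p01 p10) g cs" and t: "t \<le> T"
  shows "(\<lambda>\<omega>. stage_cost lam (Delta g a (xproc a (fst \<omega>) (fst (snd \<omega>))) cs t) (cs t)
      (act g a (xproc a (fst \<omega>) (fst (snd \<omega>))) cs t)) \<in> borel_measurable (model T \<sigma> q p01 p10)"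
proof -
  let ?M = "model T \<sigma> q p01 p10" and ?X = "\<lambda>\<omega>. xproc a (fst \<omega>) (fst (snd \<omega>))"
  have sim: "(\<lambda>\<omega>. sim_estimate g a (?X \<omega>) cs s) \<in> borel_measurable ?M \<and>
      (\<forall>s'. Measurable.pred ?M (\<lambda>\<omega>. sim_actions g a (?X \<omega>) cs s s'))" if "s \<le> T" for s
    by (rule sim_measurable[OF g], erule xproc_measurable, rule that)
  have [measurable]: "Measurable.pred ?M (\<lambda>\<omega>. act g a (?X \<omega>) cs t)"
    using sim[OF t] by (simp add: act_def)
  have [measurable]: "(\<lambda>\<omega>. Delta g a (?X \<omega>) cs t) \<in> borel_measurable ?M"
  proof (cases t)
    case (Suc s)
    with t have "s \<le> T"
      by simp
    note [measurable] = xproc_measurable[OF t[unfolded Suc]] conjunct1[OF sim[OF this]]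
    show ?thesis
      unfolding Suc Delta_Suc by measurable
  qed simp
  show ?thesis
    unfolding stage_cost_def by measurable
qed

lemma exp_total_cost_measurable:
  assumes g: "\<And>cs. measurable_rule (model T \<sigma> q p01 p10) g cs"
  shows "(\<lambda>\<omega>. ennreal (exp (\<gamma> * total_cost T a lam g \<omega>))) \<in> borel_measurable (model T \<sigma> q p01 p10)"
proof -
  let ?M = "model T \<sigma> q p01 p10" and ?X = "\<lambda>\<omega>. xproc a (fst \<omega>) (fst (snd \<omega>))"
  have "(\<lambda>\<omega>. \<Sum>t\<le>T. stage_cost lam (Delta g a (?X \<omega>) cs t) (cs t) (act g a (?X \<omega>) cs t))
      \<in> borel_measurable ?M" for cs
    using stage_cost_measurable[OF g] by (intro borel_measurable_sum) simp
  moreover have "(\<lambda>\<omega>. snd (snd \<omega>)) \<in> ?M \<rightarrow>\<^sub>M count_space channel_paths"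
  proof -
    have "?M \<rightarrow>\<^sub>M channel = ?M \<rightarrow>\<^sub>M count_space channel_paths"
      by (rule measurable_cong_sets) (simp_all add: sets_channel)
    moreover have "(\<lambda>\<omega>. snd (snd \<omega>)) \<in> ?M \<rightarrow>\<^sub>M channel"
      unfolding model_eq by measurable
    ultimately show ?thesis
      by simp
  qed
  ultimately have "(\<lambda>\<omega>. total_cost T a lam g \<omega>) \<in> borel_measurable ?M"
    unfolding total_cost_def Let_def split_beta
    by (rule measurable_compose_countable'[OF _ _ countable_finite[OF finite_channel_paths]])
  then show ?thesis
    by measurable
qed

lemma risk_cost_eq_tail_exp:
  assumes "\<And>cs. measurable_rule (model T \<sigma> q p01 p10) g cs"
  shows "risk_cost T a \<sigma> q p01 p10 lam \<gamma> g = (\<integral>\<^sup>+x0. (\<Sum>b\<in>UNIV. init_weight b *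
    tail_exp T 0 (\<lambda>w cs. cost_factor g x0 w cs (Suc T)) (\<lambda>_. undefined) ((\<lambda>_. False)(0 := b))) \<partial>init_law)"
  unfolding risk_cost_def nn_integral_model[OF exp_total_cost_measurable[OF assms]]
  by (simp add: exp_total_cost_eq_cost_factor)

lemma risk_cost_opt_rule_le:
  assumes "\<phi> \<in> hist_policies T"
  shows "risk_cost T a \<sigma> q p01 p10 lam \<gamma> opt_rule \<le> risk_cost T a \<sigma> q p01 p10 lam \<gamma> (hist_rule \<phi>)"
proof -
  have "tail_exp T 0 (\<lambda>w cs. cost_factor opt_rule x0 w cs (Suc T)) (\<lambda>_. undefined) ((\<lambda>_. False)(0 := b))
      \<le> tail_exp T 0 (\<lambda>w cs. cost_factor (hist_rule \<phi>) x0 w cs (Suc T)) (\<lambda>_. undefined) ((\<lambda>_. False)(0 := b))"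
    for x0 b
  proof -
    have "tail_exp T 0 (\<lambda>w cs. cost_factor opt_rule x0 w cs (Suc T)) (\<lambda>_. undefined) ((\<lambda>_. False)(0 := b))
        = initial_value x0 b"
      using initial_value_eq_tail_exp_opt_rule[of x0 "(\<lambda>_. False)(0 := b)"] by simp
    also have "\<dots> \<le> tail_exp T 0 (\<lambda>w cs. cost_factor (hist_rule \<phi>) x0 w cs (Suc T)) (\<lambda>_. undefined)
        ((\<lambda>_. False)(0 := b))"
      using initial_value_le_tail_exp[OF causal_hist_rule, of x0 "(\<lambda>_. False)(0 := b)"] by simp
    finally show ?thesis .
  qed
  then show ?thesis
    unfolding risk_cost_eq_tail_exp[OF measurable_rule_markov_rule[OF opt_policy_in_markov_policies]]
      risk_cost_eq_tail_exp[OF measurable_rule_hist_rule[OF assms]]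
    by (intro nn_integral_mono sum_mono mult_left_mono) simp_all
qed

lemma INF_hist_policies_eq_INF_markov_policies:
  "(INF \<phi>\<in>hist_policies T. risk_cost T a \<sigma> q p01 p10 lam \<gamma> (hist_rule \<phi>))
     = (INF \<psi>\<in>markov_policies T. risk_cost T a \<sigma> q p01 p10 lam \<gamma> (markov_rule \<psi>))"
proof (rule antisym)
  show "(INF \<phi>\<in>hist_policies T. risk_cost T a \<sigma> q p01 p10 lam \<gamma> (hist_rule \<phi>))
      \<le> (INF \<psi>\<in>markov_policies T. risk_cost T a \<sigma> q p01 p10 lam \<gamma> (markov_rule \<psi>))"
  proof (rule INF_mono)
    fix \<psi> assume "\<psi> \<in> markov_policies T"
    then show "\<exists>\<phi>\<in>hist_policies T. risk_cost T a \<sigma> q p01 p10 lam \<gamma> (hist_rule \<phi>)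
        \<le> risk_cost T a \<sigma> q p01 p10 lam \<gamma> (markov_rule \<psi>)"
      by (intro bexI[of _ "markov_as_hist a \<psi>"] markov_as_hist_in_hist_policies)
        (simp_all add: risk_cost_markov_as_hist)
  qed
  have "(INF \<psi>\<in>markov_policies T. risk_cost T a \<sigma> q p01 p10 lam \<gamma> (markov_rule \<psi>))
      \<le> risk_cost T a \<sigma> q p01 p10 lam \<gamma> opt_rule"
    by (rule INF_lower[OF opt_policy_in_markov_policies])
  also have "\<dots> \<le> (INF \<phi>\<in>hist_policies T. risk_cost T a \<sigma> q p01 p10 lam \<gamma> (hist_rule \<phi>))"
    by (rule INF_greatest) (rule risk_cost_opt_rule_le)
  finally show "(INF \<psi>\<in>markov_policies T. risk_cost T a \<sigma> q p01 p10 lam \<gamma> (markov_rule \<psi>))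
      \<le> (INF \<phi>\<in>hist_policies T. risk_cost T a \<sigma> q p01 p10 lam \<gamma> (hist_rule \<phi>))" .
qed

end

theorem lemma1:
  fixes T :: nat and a \<sigma> q p01 p10 lam \<gamma> :: real
  assumes "\<sigma> > 0" and "lam > 0" and "\<gamma> > 0"
    and "0 \<le> q" "q \<le> 1" and "0 \<le> p01" "p01 \<le> 1" and "0 \<le> p10" "p10 \<le> 1"
  shows "(INF \<phi>\<in>hist_policies T. risk_cost T a \<sigma> q p01 p10 lam \<gamma> (hist_rule \<phi>))
       = (INF \<psi>\<in>markov_policies T. risk_cost T a \<sigma> q p01 p10 lam \<gamma> (markov_rule \<psi>))"
proof -
  interpret remote_estimation T a \<sigma> q p01 p10 lam \<gamma>
    using assms by unfold_locales
  show ?thesis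
    by (rule INF_hist_policies_eq_INF_markov_policies)
qed

end
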